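(* Consider the problem with $p=0$. Let Assumption 1 hold, let $\{\mathbf x_k\}$ be generated by Algorithm MADS-PIP, and let $\mathcal K^x_\rho\subseteq\mathcal K_\rho$ be the index set of an end-path subsequence with end-path point $\bar{\mathbf x}$. Assume that $f$ is Lipschitz continuous near $\bar{\mathbf x}$, that the sequence of poll direction sets $\{\mathcal D_k\}_{k\in\mathcal K^x_\rho}$ is dense in the unit sphere, and that $\bar{\mathbf x}\in\Omega$ satisfies the SCQ. Then $f^\circ(\bar{\mathbf x};\mathbf d)\ge0$ for all $\mathbf d\in\mathcal T^H_\Omega(\bar{\mathbf x})$.
   Context: Consider the problem of minimizing $f(\mathbf x)$ over $\mathbf x\in\mathbb R^n$ subject to $g_\ell(\mathbf x)\le 0$ ($\ell=1,\dots,m$), with $f,g_\ell:\mathbb R^n\to\mathbb R\cup\{+\infty\}$ (no equality constraints, $p=0$). The index set $\{1,\dots,m\}$ is partitioned into disjoint sets $\mathcal G^{int}$ and $\mathcal G^{ext}$, fixed throughout. Define $\Omega^{int}=\{\mathbf x: g_\ell(\mathbf x)\le 0\ \forall\ell\in\mathcal G^{int}\}$, $\Omega^{ext}=\{\mathbf x: g_\ell(\mathbf x)\le0\ \forall \ell\in\mathcal G^{ext}\}$, $\Omega=\Omega^{int}\cap\Omega^{ext}$. Let $\phi^{prox}(\mathbf x)=\max_{\ell\in\mathcal G^{int}}g_\ell(\mathbf x)$; $c^{int}(\mathbf x)=-\prod_{\ell\in\mathcal G^{int}}\min\{1,-g_\ell(\mathbf x)\}$ if $g_\ell(\mathbf x)\le0$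 for all $\ell\in\mathcal G^{int}$, and $c^{int}(\mathbf x)=\phi^{prox}(\mathbf x)$ otherwise; $c^{ext}(\mathbf x)=\sum_{\ell\in\mathcal G^{ext}}(\max\{0,g_\ell(\mathbf x)\})^2$. (If $\mathcal G^{int}=\emptyset$, then $c^{int}\equiv-1$ and $[\phi^{prox}]^2$ is read as $+\infty$.) For $\rho>0$ the merit function is $z(\mathbf x;\rho)=f(\mathbf x)-\rho\log(-c^{int}(\mathbf x))+\frac1\rho c^{ext}(\mathbf x)$ if $c^{int}(\mathbf x)<0$, and $+\infty$ otherwise. Algorithm MADS-PIP: inputs $\mathbf x_0$ with $g_\ell(\mathbf x_0)<0$ for all $\ell\in\mathcal G^{int}$ and $z(\mathbf x_0;\rho_0)<+\infty$, $\rho_0>0$, $\theta_\rho\in(0,1)$, $\Delta_0>0$, $\theta_\Delta\in(0,1)\cap\mathbb Q$, $\beta>1$. For $k=0,1,2,\dots$ (the algorithm never stops): mesh $\mathcal M_k=\{\mathbf x_k+\delta_k\mathbf u:\mathbf u\in\mathbb Z^n\}$ with $\delta_k=\min\{\Delta_k,\Delta_k^2/\Delta_0\}$; frame $\mathcal F_k=\{\mathbf x\in\mathcal M_k:\|\mathbf x-\mathbf x_k\|\le\Delta_k\}$. Search: a finite (possibly empty) set $\mathcal S_k\subset\mathcal M_k$ is examined; if some $\mathbf s\in\mathcal S_k$ satisfies $z(\mathbf s;\rho_k)<z(\mathbf x_k;\rho_k)$, set $\mathbf x_{k+1}=\mathbf s$, $\Delta_{k+1}=\Delta_k/\theta_\Delta$,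 $\rho_{k+1}=\rho_k$ (successful iteration). Otherwise poll: choose a finite set $\mathcal D_k$ of nonzero directions with $\mathbf x_k+\mathbf d\in\mathcal F_k$ for all $\mathbf d\in\mathcal D_k$; if some $\mathbf d\in\mathcal D_k$ satisfies $z(\mathbf x_k+\mathbf d;\rho_k)<z(\mathbf x_k;\rho_k)$, set $\mathbf x_{k+1}=\mathbf x_k+\mathbf d$, $\Delta_{k+1}=\Delta_k/\theta_\Delta$, $\rho_{k+1}=\rho_k$ (successful). Otherwise the iteration is unsuccessful: $\mathbf x_{k+1}=\mathbf x_k$, $\Delta_{k+1}=\theta_\Delta\Delta_k$, and $\rho_{k+1}=\theta_\rho\rho_k$ if $\Delta_{k+1}\le\min\{\rho_k^\beta,[\phi^{prox}(\mathbf x_k)]^2\}$, else $\rho_{k+1}=\rho_k$. The path-following index set is $\mathcal K_\rho=\{k:\rho_{k+1}<\rho_k\}$. A point $\bar{\mathbf x}$ is an end-path point if there is an infinite $\mathcal K_\rho^{x}\subseteq\mathcal K_\rho$ with $\lim_{k\in\mathcal K_\rho^x}\mathbf x_k=\bar{\mathbf x}$; $\{\mathbf x_k\}_{k\in\mathcal K^x_\rho}$ is then an end-path subsequence. Assumption 1: for every $\alpha\in\mathbb R$ the level set $\{\mathbf x\in\mathbb R^n: f(\mathbf x)\le\alpha\}$ is bounded. Clarke generalized directional derivative: $c^\circ(\mathbf x;\mathbf d)=\limsup_{\mathbf y\to\mathbf x,\ t\searrow0}\frac{c(\mathbf y+t\mathbf d)-c(\mathbf y)}{t}$. $\mathcal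 B(\mathbf x,\epsilon)$ is the ball of radius $\epsilon$ centred at $\mathbf x$. Density: for an infinite index set $\mathcal K$, the sequence $\{\mathcal D_k\}_{k\in\mathcal K}$ is dense in the unit sphere if for every unit vector $\bar{\mathbf d}$ there exist an infinite $\mathcal K^d\subseteq\mathcal K$ and $\mathbf d_k\in\mathcal D_k$ ($k\in\mathcal K^d$) with $\lim_{k\in\mathcal K^d}\mathbf d_k/\|\mathbf d_k\|=\bar{\mathbf d}$. Hypertangent cone: $\mathbf d$ is hypertangent to $\Omega$ at $\mathbf x$ if there is $\epsilon>0$ with $\mathbf y+t\mathbf w\in\Omega$ for all $\mathbf y\in\Omega\cap\mathcal B(\mathbf x,\epsilon)$, $\mathbf w\in\mathcal B(\mathbf d,\epsilon)$, $t\in(0,\epsilon)$; $\mathcal T^H_\Omega(\mathbf x)$ is the set of such vectors. Stationarity constraint qualification (SCQ): a point $\mathbf x\in\Omega$ satisfies SCQ if (a) $c^{int}$ and $c^{ext}$ are Lipschitz continuous near $\mathbf x$; (b) $(c^{int})^\circ(\mathbf x;\mathbf d)<0$ for every $\mathbf d\in\mathcal T^H_\Omega(\mathbf x)$; (c) for every $\mathbf d\in\mathcal T^H_\Omega(\mathbf x)$ there is $\epsilon>0$ such that $(c^{ext})^\circ(\mathbf y;\mathbf d)<0$ for all $\mathbf y\in\mathcal B(\mathbf x,\epsilon)\setminus\Omega^{ext}$. *)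

theory Defs
  imports "HOL-Analysis.Analysis" "HOL-Library.Liminf_Limsup"
begin

text \<open>Functions take values in the extended reals; the paper's codomain is
  the reals together with plus infinity, so minus infinity is excluded by
  hypotheses in the main theorem.\<close>

definition Omega_int :: "(nat \<Rightarrow> real^'n \<Rightarrow> ereal) \<Rightarrow> nat set \<Rightarrow> (real^'n) set" where
  "Omega_int g Gint = {x. \<forall>l\<in>Gint. g l x \<le> 0}"

definition Omega_ext :: "(nat \<Rightarrow> real^'n \<Rightarrow> ereal) \<Rightarrow> nat set \<Rightarrow> (real^'n) set" where
  "Omega_ext g Gext = {x. \<forall>l\<in>Gext. g l x \<le> 0}"

definition Omega :: "(nat \<Rightarrow> real^'n \<Rightarrow> ereal) \<Rightarrow> nat set \<Rightarrow> nat set \<Rightarrow> (real^'n) set" where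
  "Omega g Gint Gext = Omega_int g Gint \<inter> Omega_ext g Gext"

definition phi_prox :: "(nat \<Rightarrow> real^'n \<Rightarrow> ereal) \<Rightarrow> nat set \<Rightarrow> real^'n \<Rightarrow> ereal" where
  "phi_prox g Gint x = Max ((\<lambda>l. g l x) ` Gint)"

definition phi_prox_sq :: "(nat \<Rightarrow> real^'n \<Rightarrow> ereal) \<Rightarrow> nat set \<Rightarrow> real^'n \<Rightarrow> ereal" where
  "phi_prox_sq g Gint x = (if Gint = {} then \<infinity> else (phi_prox g Gint x)^2)"

definition c_int :: "(nat \<Rightarrow> real^'n \<Rightarrow> ereal) \<Rightarrow> nat set \<Rightarrow> real^'n \<Rightarrow> ereal" where
  "c_int g Gint x =
     (if \<forall>l\<in>Gint. g l x \<le> 0 then - (\<Prod>l\<in>Gint. min 1 (- g l x))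
      else phi_prox g Gint x)"

definition c_ext :: "(nat \<Rightarrow> real^'n \<Rightarrow> ereal) \<Rightarrow> nat set \<Rightarrow> real^'n \<Rightarrow> ereal" where
  "c_ext g Gext x = (\<Sum>l\<in>Gext. (max 0 (g l x))^2)"

definition merit :: "(real^'n \<Rightarrow> ereal) \<Rightarrow> (nat \<Rightarrow> real^'n \<Rightarrow> ereal) \<Rightarrow> nat set \<Rightarrow> nat set
                     \<Rightarrow> real \<Rightarrow> real^'n \<Rightarrow> ereal" where
  "merit f g Gint Gext \<rho> x =
     (if c_int g Gint x < 0
      then f x - ereal (\<rho> * ln (- real_of_ereal (c_int g Gint x))) + c_ext g Gext x / ereal \<rho>
      else \<infinity>)"

definition mesh_size :: "(nat \<Rightarrow> real) \<Rightarrow> nat \<Rightarrow> real" where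
  "mesh_size \<Delta> k = min (\<Delta> k) ((\<Delta> k)^2 / \<Delta> 0)"

definition mesh :: "(nat \<Rightarrow> real^'n) \<Rightarrow> (nat \<Rightarrow> real) \<Rightarrow> nat \<Rightarrow> (real^'n) set" where
  "mesh x \<Delta> k = {y. \<exists>u::real^'n. (\<forall>i. u $ i \<in> \<int>) \<and> y = x k + mesh_size \<Delta> k *\<^sub>R u}"

definition frame :: "(nat \<Rightarrow> real^'n) \<Rightarrow> (nat \<Rightarrow> real) \<Rightarrow> nat \<Rightarrow> (real^'n) set" where
  "frame x \<Delta> k = {y \<in> mesh x \<Delta> k. norm (y - x k) \<le> \<Delta> k}"

text \<open>A run of MADS-PIP: sequences of iterates x, frame sizes Delta, barrier
  parameters rho, search sets S and poll direction sets D.\<close>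
definition mads_pip_run ::
  "(real^'n \<Rightarrow> ereal) \<Rightarrow> (nat \<Rightarrow> real^'n \<Rightarrow> ereal) \<Rightarrow> nat set \<Rightarrow> nat set
   \<Rightarrow> real \<Rightarrow> real \<Rightarrow> real
   \<Rightarrow> (nat \<Rightarrow> real^'n) \<Rightarrow> (nat \<Rightarrow> real) \<Rightarrow> (nat \<Rightarrow> real)
   \<Rightarrow> (nat \<Rightarrow> (real^'n) set) \<Rightarrow> (nat \<Rightarrow> (real^'n) set) \<Rightarrow> bool" where
  "mads_pip_run f g Gint Gext \<theta>\<rho> \<theta>\<Delta> \<beta> x \<Delta> \<rho> S D \<longleftrightarrow>
     (\<forall>l\<in>Gint. g l (x 0) < 0) \<and> merit f g Gint Gext (\<rho> 0) (x 0) < \<infinity> \<and>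
     \<rho> 0 > 0 \<and> 0 < \<theta>\<rho> \<and> \<theta>\<rho> < 1 \<and> \<Delta> 0 > 0 \<and>
     0 < \<theta>\<Delta> \<and> \<theta>\<Delta> < 1 \<and> \<theta>\<Delta> \<in> \<rat> \<and> \<beta> > 1 \<and>
     (\<forall>k. finite (S k) \<and> S k \<subseteq> mesh x \<Delta> k \<and>
        (let zk = merit f g Gint Gext (\<rho> k) in
         if \<exists>s\<in>S k. zk s < zk (x k) then
           x (Suc k) \<in> S k \<and> zk (x (Suc k)) < zk (x k) \<and>
           \<Delta> (Suc k) = \<Delta> k / \<theta>\<Delta> \<and> \<rho> (Suc k) = \<rho> k
         else
           finite (D k) \<and> 0 \<notin> D k \<and> (\<forall>d\<in>D k. x k + d \<in> frame x \<Delta> k) \<and>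
           (if \<exists>d\<in>D k. zk (x k + d) < zk (x k) then
              (\<exists>d\<in>D k. zk (x k + d) < zk (x k) \<and> x (Suc k) = x k + d) \<and>
              \<Delta> (Suc k) = \<Delta> k / \<theta>\<Delta> \<and> \<rho> (Suc k) = \<rho> k
            else
              x (Suc k) = x k \<and> \<Delta> (Suc k) = \<theta>\<Delta> * \<Delta> k \<and>
              \<rho> (Suc k) = (if ereal (\<Delta> (Suc k)) \<le> min (ereal (\<rho> k powr \<beta>)) (phi_prox_sq g Gint (x k))
                            then \<theta>\<rho> * \<rho> k else \<rho> k))))"

definition K_rho :: "(nat \<Rightarrow> real) \<Rightarrow> nat set" where
  "K_rho \<rho> = {k. \<rho> (Suc k) < \<rho> k}"

definition conv_along :: "(nat \<Rightarrow> 'a::metric_space) \<Rightarrow> nat set \<Rightarrow> 'a \<Rightarrow> bool" where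
  "conv_along s K a \<longleftrightarrow> (\<forall>e>0. \<exists>N. \<forall>k\<in>K. k \<ge> N \<longrightarrow> dist (s k) a < e)"

definition end_path_subsequence :: "(nat \<Rightarrow> real^'n) \<Rightarrow> (nat \<Rightarrow> real) \<Rightarrow> nat set \<Rightarrow> real^'n \<Rightarrow> bool" where
  "end_path_subsequence x \<rho> K xbar \<longleftrightarrow> K \<subseteq> K_rho \<rho> \<and> infinite K \<and> conv_along x K xbar"

definition dense_poll :: "(nat \<Rightarrow> (real^'n) set) \<Rightarrow> nat set \<Rightarrow> bool" where
  "dense_poll D K \<longleftrightarrow>
     (\<forall>dbar::real^'n. norm dbar = 1 \<longrightarrow>
        (\<exists>Kd dk. Kd \<subseteq> K \<and> infinite Kd \<and> (\<forall>k\<in>Kd. dk k \<in> D k) \<and>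
                 conv_along (\<lambda>k. dk k /\<^sub>R norm (dk k)) Kd dbar))"

definition lipschitz_near :: "(real^'n \<Rightarrow> ereal) \<Rightarrow> real^'n \<Rightarrow> bool" where
  "lipschitz_near c x \<longleftrightarrow>
     (\<exists>\<epsilon>>0. \<exists>L. \<forall>y\<in>ball x \<epsilon>. \<forall>w\<in>ball x \<epsilon>.
        \<exists>a b. c y = ereal a \<and> c w = ereal b \<and> \<bar>a - b\<bar> \<le> L * dist y w)"

definition clarke_dd :: "(real^'n \<Rightarrow> ereal) \<Rightarrow> real^'n \<Rightarrow> real^'n \<Rightarrow> ereal" where
  "clarke_dd c x d =
     Limsup (nhds x \<times>\<^sub>F at_right 0) (\<lambda>(y, t). (c (y + t *\<^sub>R d) - c y) / ereal t)"

definition hypertangent :: "(real^'n) set \<Rightarrow> real^'n \<Rightarrow> (real^'n) set" where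
  "hypertangent \<Omega> x =
     {d. \<exists>\<epsilon>>0. \<forall>y\<in>\<Omega> \<inter> ball x \<epsilon>. \<forall>w\<in>ball d \<epsilon>. \<forall>t. 0 < t \<and> t < \<epsilon> \<longrightarrow> y + t *\<^sub>R w \<in> \<Omega>}"

definition SCQ :: "(nat \<Rightarrow> real^'n \<Rightarrow> ereal) \<Rightarrow> nat set \<Rightarrow> nat set \<Rightarrow> real^'n \<Rightarrow> bool" where
  "SCQ g Gint Gext x \<longleftrightarrow>
     x \<in> Omega g Gint Gext \<and>
     lipschitz_near (c_int g Gint) x \<and> lipschitz_near (c_ext g Gext) x \<and>
     (\<forall>d\<in>hypertangent (Omega g Gint Gext) x. clarke_dd (c_int g Gint) x d < 0) \<and>
     (\<forall>d\<in>hypertangent (Omega g Gint Gext) x. \<exists>\<epsilon>>0.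
        \<forall>y\<in>ball x \<epsilon> - Omega_ext g Gext. clarke_dd (c_ext g Gext) y d < 0)"

end

theory Submission
  imports Defs
begin

text \<open>Suppose the Clarke derivative of f at xbar is negative in some hypertangent direction d.
  Then, uniformly for y near xbar with c_int y < 0, for w near d and for small t > 0, the step
  from y to y + t w strictly decreases f and c_int (negative Clarke derivative plus Lipschitz
  continuity) and does not increase c_ext: either the segment meets Omega_ext, after which
  hypertangency keeps it in Omega, or it stays outside Omega_ext, where w is a nonnegative
  combination of the vertices of a small cross-polytope around d, each a uniform descent
  direction of c_ext by the SCQ.  So the step decreases the merit function for every rho.
  At the end-path iterations the poll fails, the frame size tends to zero (it is bounded by
  rho_k to the power beta, and rho_k tends to zero), and by density some poll direction is such
  a step taken from an iterate near xbar: a contradiction.\<close>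

lemma clarke_dd_lessD:
  fixes c :: "real^'n \<Rightarrow> ereal"
  assumes "clarke_dd c x d < ereal e"
  obtains r t0 where "r > 0" "t0 > 0"
    "\<And>y t. y \<in> ball x r \<Longrightarrow> 0 < t \<Longrightarrow> t < t0 \<Longrightarrow> (c (y + t *\<^sub>R d) - c y) / ereal t < ereal e"
proof -
  have "\<forall>\<^sub>F (y, t) in nhds x \<times>\<^sub>F at_right 0. (c (y + t *\<^sub>R d) - c y) / ereal t < ereal e"
    using Limsup_lessD[OF assms[unfolded clarke_dd_def]] by (simp add: case_prod_unfold)
  then obtain P Q where P: "eventually P (nhds x)" and Q: "eventually Q (at_right (0::real))"
    and PQ: "\<And>y t. P y \<Longrightarrow> Q t \<Longrightarrow> (c (y + t *\<^sub>R d) - c y) / ereal t < ereal e"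
    unfolding eventually_prod_filter by auto
  obtain r where "r > 0" "\<And>y. dist y x < r \<Longrightarrow> P y"
    using P unfolding eventually_nhds_metric by auto
  moreover obtain t0 where "t0 > 0" "\<And>t. 0 < t \<Longrightarrow> t < t0 \<Longrightarrow> Q t"
    using Q unfolding eventually_at_right_field by auto
  ultimately show thesis
    using that PQ by (metis dist_commute mem_ball)
qed

lemma lipschitz_near_real:
  assumes "lipschitz_near c x"
  obtains \<epsilon> C L where "\<epsilon> > 0" "\<And>y. y \<in> ball x \<epsilon> \<Longrightarrow> c y = ereal (C y)"
    "L-lipschitz_on (ball x \<epsilon>) C"
proof -
  obtain \<epsilon> L where "\<epsilon> > 0" and lip: "\<forall>y\<in>ball x \<epsilon>. \<forall>w\<in>ball x \<epsilon>.
      \<exists>a b. c y = ereal a \<and> c w = ereal b \<and> \<bar>a - b\<bar> \<le> L * dist y w"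
    using assms unfolding lipschitz_near_def by blast
  have "c y = ereal (real_of_ereal (c y))" if "y \<in> ball x \<epsilon>" for y
    using lip that by fastforce
  moreover have "(max L 0)-lipschitz_on (ball x \<epsilon>) (\<lambda>y. real_of_ereal (c y))"
  proof (rule lipschitz_onI)
    fix y w assume "y \<in> ball x \<epsilon>" "w \<in> ball x \<epsilon>"
    then obtain a b where "c y = ereal a" "c w = ereal b" "\<bar>a - b\<bar> \<le> L * dist y w"
      using lip by blast
    moreover have "L * dist y w \<le> max L 0 * dist y w" by (simp add: mult_right_mono)
    ultimately show "dist (real_of_ereal (c y)) (real_of_ereal (c w)) \<le> max L 0 * dist y w"
      by (simp add: dist_real_def)
  qed simp
  ultimately show thesis by (rule that[OF \<open>\<epsilon> > 0\<close>])
qed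

lemma lipschitz_near_finite:
  assumes "lipschitz_near c x"
  obtains \<epsilon> where "\<epsilon> > 0" "\<And>y. y \<in> ball x \<epsilon> \<Longrightarrow> \<bar>c y\<bar> \<noteq> \<infinity>"
proof -
  obtain \<epsilon> C L where "\<epsilon> > 0" "\<And>y. y \<in> ball x \<epsilon> \<Longrightarrow> c y = ereal (C y)"
    using lipschitz_near_real[OF assms] by metis
  then show thesis using that by simp
qed

lemma add_scaleR_mem_ball:
  fixes y v :: "'a::real_normed_vector"
  assumes "dist x y < a" "0 \<le> t" "t * norm v \<le> b"
  shows "y + t *\<^sub>R v \<in> ball x (a + b)"
proof -
  have "dist x (y + t *\<^sub>R v) \<le> dist x y + t * norm v"
    using dist_triangle[of x "y + t *\<^sub>R v" y] \<open>0 \<le> t\<close> by (simp add: dist_norm)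
  then show ?thesis using assms by simp
qed

lemma lipschitz_on_perturbed_decrease:
  fixes C :: "'a::real_normed_vector \<Rightarrow> real"
  assumes "L-lipschitz_on U C" "y + t *\<^sub>R d \<in> U" "y + t *\<^sub>R w \<in> U" "0 < t"
    and "C (y + t *\<^sub>R d) - C y < - e * t" "L * norm (w - d) < e"
  shows "C (y + t *\<^sub>R w) < C y"
proof -
  have "\<bar>C (y + t *\<^sub>R w) - C (y + t *\<^sub>R d)\<bar> \<le> L * (t * norm (w - d))"
    using lipschitz_onD[OF assms(1,3,2)] \<open>0 < t\<close>
    by (simp add: dist_real_def dist_norm scaleR_diff_right[symmetric])
  also have "\<dots> < e * t"
    using mult_strict_left_mono[OF assms(6) \<open>0 < t\<close>] by (simp add: ac_simps)
  finally show ?thesis using assms(5) by (simp add: abs_less_iff)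
qed

lemma clarke_dd_neg_imp_decrease:
  fixes c :: "real^'n \<Rightarrow> ereal"
  assumes "clarke_dd c x d < 0" "lipschitz_near c x"
  obtains r \<eta> t0 where "r > 0" "\<eta> > 0" "t0 > 0" "\<And>y. y \<in> ball x r \<Longrightarrow> \<bar>c y\<bar> \<noteq> \<infinity>"
    "\<And>y w t. y \<in> ball x r \<Longrightarrow> w \<in> ball d \<eta> \<Longrightarrow> 0 < t \<Longrightarrow> t < t0 \<Longrightarrow> c (y + t *\<^sub>R w) < c y"
proof -
  obtain z where z: "clarke_dd c x d < ereal z" "ereal z < 0"
    using ereal_dense2[OF assms(1)] by blast
  define e where "e = - z"
  have e: "e > 0" "clarke_dd c x d < ereal (- e)"
    using z by (simp_all add: e_def)
  obtain r1 t1 where "r1 > 0" "t1 > 0" and slope: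
    "\<And>y t. y \<in> ball x r1 \<Longrightarrow> 0 < t \<Longrightarrow> t < t1 \<Longrightarrow> (c (y + t *\<^sub>R d) - c y) / ereal t < ereal (- e)"
    using clarke_dd_lessD[OF e(2)] by blast
  obtain \<epsilon> C L where "\<epsilon> > 0" and real: "\<And>y. y \<in> ball x \<epsilon> \<Longrightarrow> c y = ereal (C y)"
    and lip: "L-lipschitz_on (ball x \<epsilon>) C"
    using lipschitz_near_real[OF assms(2)] by metis
  have "L \<ge> 0" using lip by (rule lipschitz_on_nonneg)
  define r where "r = min r1 (\<epsilon> / 2)"
  define \<eta> where "\<eta> = min 1 (e / (L + 1))"
  define M where "M = norm d + 1"
  have "M > 0" by (simp add: M_def add_nonneg_pos)
  define t0 where "t0 = min t1 (\<epsilon> / (2 * M))"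
  have "r > 0" "\<eta> > 0" "t0 > 0"
    using \<open>r1 > 0\<close> \<open>t1 > 0\<close> \<open>\<epsilon> > 0\<close> \<open>e > 0\<close> \<open>L \<ge> 0\<close> \<open>M > 0\<close>
    by (simp_all add: r_def \<eta>_def t0_def)
  moreover have "\<bar>c y\<bar> \<noteq> \<infinity>" if "y \<in> ball x r" for y
  proof -
    have "y \<in> ball x \<epsilon>" using that zero_le_dist[of x y] unfolding r_def mem_ball by linarith
    then show ?thesis using real by simp
  qed
  moreover have "c (y + t *\<^sub>R w) < c y"
    if y: "y \<in> ball x r" and w: "w \<in> ball d \<eta>" and t: "0 < t" "t < t0" for y w t
  proof -
    have "norm (w - d) < \<eta>" using w by (simp add: dist_norm norm_minus_commute)
    have "y + t *\<^sub>R v \<in> ball x \<epsilon>" if "norm v \<le> M" for v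
    proof -
      have "t * norm v \<le> \<epsilon> / (2 * M) * M"
        using that t \<open>M > 0\<close> by (intro mult_mono) (auto simp: t0_def)
      then show ?thesis
        using add_scaleR_mem_ball[of x y "\<epsilon> / 2" t v "\<epsilon> / 2"] y t \<open>M > 0\<close> by (simp add: r_def)
    qed
    moreover have "norm w \<le> M"
      using norm_triangle_ineq[of d "w - d"] \<open>norm (w - d) < \<eta>\<close> by (simp add: \<eta>_def M_def)
    ultimately have yd: "y + t *\<^sub>R d \<in> ball x \<epsilon>" and yw: "y + t *\<^sub>R w \<in> ball x \<epsilon>"
      by (auto simp: M_def)
    have y\<epsilon>: "y \<in> ball x \<epsilon>" using y zero_le_dist[of x y] unfolding r_def mem_ball by linarith
    have "(c (y + t *\<^sub>R d) - c y) / ereal t < ereal (- e)"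
      using slope y t by (simp add: r_def t0_def)
    then have "C (y + t *\<^sub>R d) - C y < - e * t"
      using real[OF yd] real[OF y\<epsilon>] t by (simp add: pos_divide_less_eq)
    moreover have "L * norm (w - d) < e"
    proof -
      have "L * norm (w - d) \<le> L * (e / (L + 1))"
        using \<open>norm (w - d) < \<eta>\<close> \<open>L \<ge> 0\<close> by (intro mult_left_mono) (auto simp: \<eta>_def)
      also have "\<dots> < e" using \<open>e > 0\<close> \<open>L \<ge> 0\<close> by (simp add: field_simps)
      finally show ?thesis .
    qed
    ultimately have "C (y + t *\<^sub>R w) < C y"
      by (rule lipschitz_on_perturbed_decrease[OF lip yd yw \<open>0 < t\<close>])
    then show ?thesis using real[OF yw] real[OF y\<epsilon>] by simp
  qed
  ultimately show thesis using that by blast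
qed

lemma clarke_dd_neg_imp_nonzero:
  fixes c :: "real^'n \<Rightarrow> ereal"
  assumes "clarke_dd c x d < 0" "lipschitz_near c x"
  shows "d \<noteq> 0"
proof
  assume "d = 0"
  obtain r \<eta> t0 where "r > 0" "\<eta> > 0" "t0 > 0" and dec:
    "\<And>y w t. y \<in> ball x r \<Longrightarrow> w \<in> ball d \<eta> \<Longrightarrow> 0 < t \<Longrightarrow> t < t0 \<Longrightarrow> c (y + t *\<^sub>R w) < c y"
    using clarke_dd_neg_imp_decrease[OF assms] by metis
  have "c (x + (t0 / 2) *\<^sub>R d) < c x" using dec \<open>r > 0\<close> \<open>\<eta> > 0\<close> \<open>t0 > 0\<close> by simp
  then show False using \<open>d = 0\<close> by simp
qed

definition uniform_descent_dir :: "('a::real_normed_vector \<Rightarrow> 'b::order) \<Rightarrow> 'a \<Rightarrow> 'a \<Rightarrow> bool" where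
  "uniform_descent_dir c u p \<longleftrightarrow>
     (\<exists>r>0. \<exists>t0>0. \<forall>y\<in>ball u r. \<forall>t. 0 < t \<and> t < t0 \<longrightarrow> c (y + t *\<^sub>R p) \<le> c y)"

lemma uniform_descent_dirE:
  assumes "uniform_descent_dir c u p"
  obtains r t0 where "r > 0" "t0 > 0"
    "\<And>y t. y \<in> ball u r \<Longrightarrow> 0 < t \<Longrightarrow> t < t0 \<Longrightarrow> c (y + t *\<^sub>R p) \<le> c y"
  using assms unfolding uniform_descent_dir_def by blast

lemma uniform_descent_dir_zero: "uniform_descent_dir c u 0"
  unfolding uniform_descent_dir_def by (auto intro!: exI[of _ 1])

lemma uniform_descent_dir_scaleR:
  assumes "uniform_descent_dir c u p" "0 \<le> a"
  shows "uniform_descent_dir c u (a *\<^sub>R p)"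
proof (cases "a = 0")
  case True
  then show ?thesis by (simp add: uniform_descent_dir_zero)
next
  case False
  then have "a > 0" using assms(2) by simp
  obtain r t0 where "r > 0" "t0 > 0"
    and dec: "\<And>y t. y \<in> ball u r \<Longrightarrow> 0 < t \<Longrightarrow> t < t0 \<Longrightarrow> c (y + t *\<^sub>R p) \<le> c y"
    using assms(1) uniform_descent_dirE by blast
  have "\<forall>y\<in>ball u r. \<forall>t. 0 < t \<and> t < t0 / a \<longrightarrow> c (y + t *\<^sub>R (a *\<^sub>R p)) \<le> c y"
    using dec \<open>a > 0\<close> by (simp add: field_simps)
  moreover have "t0 / a > 0" using \<open>t0 > 0\<close> \<open>a > 0\<close> by simp
  ultimately show ?thesis
    unfolding uniform_descent_dir_def using \<open>r > 0\<close> by blast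
qed

lemma uniform_descent_dir_add:
  assumes "uniform_descent_dir c u p" "uniform_descent_dir c u q"
  shows "uniform_descent_dir c u (p + q)"
proof -
  obtain r1 t1 where "r1 > 0" "t1 > 0"
    and dec_p: "\<And>y t. y \<in> ball u r1 \<Longrightarrow> 0 < t \<Longrightarrow> t < t1 \<Longrightarrow> c (y + t *\<^sub>R p) \<le> c y"
    using assms(1) uniform_descent_dirE by blast
  obtain r2 t2 where "r2 > 0" "t2 > 0"
    and dec_q: "\<And>y t. y \<in> ball u r2 \<Longrightarrow> 0 < t \<Longrightarrow> t < t2 \<Longrightarrow> c (y + t *\<^sub>R q) \<le> c y"
    using assms(2) uniform_descent_dirE by blast
  define M where "M = norm q + 1"
  have "M > 0" by (simp add: M_def add_nonneg_pos)
  define r where "r = min (r1 / 2) r2"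
  define t0 where "t0 = min (min t1 t2) (r1 / (2 * M))"
  have "r > 0" "t0 > 0"
    using \<open>r1 > 0\<close> \<open>r2 > 0\<close> \<open>t1 > 0\<close> \<open>t2 > 0\<close> \<open>M > 0\<close> by (simp_all add: r_def t0_def)
  moreover have "c (y + t *\<^sub>R (p + q)) \<le> c y" if y: "y \<in> ball u r" and t: "0 < t" "t < t0" for y t
  proof -
    have "t * norm q \<le> r1 / (2 * M) * M"
      using t \<open>M > 0\<close> by (intro mult_mono) (auto simp: t0_def M_def)
    then have "y + t *\<^sub>R q \<in> ball u r1"
      using add_scaleR_mem_ball[of u y "r1 / 2" t q "r1 / 2"] y t \<open>M > 0\<close> by (simp add: r_def)
    then have "c ((y + t *\<^sub>R q) + t *\<^sub>R p) \<le> c (y + t *\<^sub>R q)"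
      using dec_p t by (simp add: t0_def)
    also have "c (y + t *\<^sub>R q) \<le> c y"
      using dec_q y t by (simp add: r_def t0_def)
    finally show ?thesis by (simp add: algebra_simps)
  qed
  ultimately show ?thesis
    unfolding uniform_descent_dir_def by blast
qed

lemma uniform_descent_dir_sum:
  assumes "finite J" "\<And>j. j \<in> J \<Longrightarrow> 0 \<le> a j" "\<And>j. j \<in> J \<Longrightarrow> uniform_descent_dir c u (p j)"
  shows "uniform_descent_dir c u (\<Sum>j\<in>J. a j *\<^sub>R p j)"
  using assms
  by (induction J rule: finite_induct)
     (auto intro: uniform_descent_dir_zero uniform_descent_dir_add uniform_descent_dir_scaleR)

lemma clarke_dd_neg_imp_uniform_descent_dir:
  fixes c :: "real^'n \<Rightarrow> ereal"
  assumes "clarke_dd c u p < 0" "r > 0" "\<And>z. z \<in> ball u r \<Longrightarrow> \<bar>c z\<bar> \<noteq> \<infinity>"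
  shows "uniform_descent_dir c u p"
proof -
  obtain r1 t1 where "r1 > 0" "t1 > 0" and slope:
    "\<And>y t. y \<in> ball u r1 \<Longrightarrow> 0 < t \<Longrightarrow> t < t1 \<Longrightarrow> (c (y + t *\<^sub>R p) - c y) / ereal t < ereal 0"
    using clarke_dd_lessD[of c u p 0] assms(1) by (auto simp: zero_ereal_def)
  have "c (y + t *\<^sub>R p) \<le> c y" if "y \<in> ball u (min r1 r)" "0 < t" "t < t1" for y t
  proof -
    have "(c (y + t *\<^sub>R p) - c y) / ereal t < 0"
      using slope that by (simp add: zero_ereal_def)
    moreover have "\<bar>c y\<bar> \<noteq> \<infinity>" using assms(3) that by simp
    then obtain b where "c y = ereal b" by (cases "c y") auto
    ultimately show ?thesis
      using \<open>0 < t\<close> by (cases "c (y + t *\<^sub>R p)") (auto simp: divide_less_0_iff)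
  qed
  then show ?thesis
    unfolding uniform_descent_dir_def using \<open>r1 > 0\<close> \<open>t1 > 0\<close> \<open>r > 0\<close>
    by (intro exI[of _ "min r1 r"] exI[of _ t1]) auto
qed

lemma locally_nonincreasing_imp_le:
  fixes \<psi> :: "real \<Rightarrow> 'b::order"
  assumes "a \<le> b"
    and local: "\<And>s. s \<in> {a..b} \<Longrightarrow>
      \<exists>\<delta>>0. \<forall>u\<in>{a..b} \<inter> ball s \<delta>. \<forall>v\<in>{a..b} \<inter> ball s \<delta>. u \<le> v \<longrightarrow> \<psi> v \<le> \<psi> u"
  shows "\<psi> b \<le> \<psi> a"
proof -
  define P where "P \<sigma> \<longleftrightarrow> (\<forall>r\<in>{a..\<sigma>}. \<psi> r \<le> \<psi> a)" for \<sigma>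
  have "P b"
  proof (rule connected_induction_simple[of "{a..b}" a b P])
    fix s assume "s \<in> {a..b}"
    then obtain \<delta> where "\<delta> > 0" and mono:
      "\<forall>u\<in>{a..b} \<inter> ball s \<delta>. \<forall>v\<in>{a..b} \<inter> ball s \<delta>. u \<le> v \<longrightarrow> \<psi> v \<le> \<psi> u"
      using local by blast
    let ?T = "{a..b} \<inter> ball s \<delta>"
    have "P y" if x: "x \<in> ?T" and y: "y \<in> ?T" and "P x" for x y
      unfolding P_def
    proof
      fix r assume r: "r \<in> {a..y}"
      show "\<psi> r \<le> \<psi> a"
      proof (cases "r \<le> x")
        case True
        then show ?thesis using r \<open>P x\<close> by (simp add: P_def)
      next
        case False
        have "\<bar>s - r\<bar> < \<delta>"
          using x y r False by (auto simp: dist_real_def abs_less_iff)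
        then have "r \<in> ?T" using x y r by (simp add: dist_real_def)
        then have "\<psi> r \<le> \<psi> x" using mono x False by simp
        also have "\<psi> x \<le> \<psi> a" using \<open>P x\<close> x by (simp add: P_def)
        finally show ?thesis .
      qed
    qed
    moreover have "openin (top_of_set {a..b}) ?T" by (simp add: openin_open_Int)
    moreover have "s \<in> ?T" using \<open>s \<in> {a..b}\<close> \<open>\<delta> > 0\<close> by simp
    ultimately show "\<exists>T. openin (top_of_set {a..b}) T \<and> s \<in> T \<and> (\<forall>x\<in>T. \<forall>y\<in>T. P x \<longrightarrow> P y)"
      by blast
  qed (use \<open>a \<le> b\<close> in \<open>simp_all add: P_def\<close>)
  then show ?thesis using \<open>a \<le> b\<close> by (simp add: P_def)
qed

lemma uniform_descent_dir_segment:
  assumes "0 \<le> t" "\<And>\<sigma>. \<sigma> \<in> {0..t} \<Longrightarrow> uniform_descent_dir c (y + \<sigma> *\<^sub>R w) w"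
  shows "c (y + t *\<^sub>R w) \<le> c y"
proof -
  have "c (y + t *\<^sub>R w) \<le> c (y + 0 *\<^sub>R w)"
  proof (rule locally_nonincreasing_imp_le[where \<psi> = "\<lambda>\<sigma>. c (y + \<sigma> *\<^sub>R w)"])
    fix s assume "s \<in> {0..t}"
    then obtain r t0 where "r > 0" "t0 > 0" and dec:
      "\<And>z h. z \<in> ball (y + s *\<^sub>R w) r \<Longrightarrow> 0 < h \<Longrightarrow> h < t0 \<Longrightarrow> c (z + h *\<^sub>R w) \<le> c z"
      using uniform_descent_dirE[OF assms(2)] by blast
    define M where "M = norm w + 1"
    have "M > 0" by (simp add: M_def add_nonneg_pos)
    define \<delta> where "\<delta> = min (r / M) (t0 / 2)"
    have "\<delta> \<le> r / M" "\<delta> \<le> t0 / 2" unfolding \<delta>_def by (rule min.cobounded1, rule min.cobounded2)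
    have "c (y + v *\<^sub>R w) \<le> c (y + u *\<^sub>R w)"
      if "u \<in> ball s \<delta>" "v \<in> ball s \<delta>" "u \<le> v" for u v
    proof (cases "u = v")
      case False
      then have "u < v" using \<open>u \<le> v\<close> by simp
      have u: "\<bar>s - u\<bar> < \<delta>" and v: "\<bar>s - v\<bar> < \<delta>"
        using that by (simp_all add: dist_real_def)
      have "\<bar>s - u\<bar> * norm w \<le> r / M * norm w"
        using u \<open>\<delta> \<le> r / M\<close> by (intro mult_right_mono) auto
      also have "\<dots> < r"
        using \<open>r > 0\<close> \<open>M > 0\<close> by (simp add: M_def field_simps)
      finally have "y + u *\<^sub>R w \<in> ball (y + s *\<^sub>R w) r"
        by (simp add: dist_norm scaleR_diff_left[symmetric])
      moreover have "v - u < t0"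
        using u v \<open>\<delta> \<le> t0 / 2\<close> unfolding abs_less_iff by linarith
      ultimately have "c ((y + u *\<^sub>R w) + (v - u) *\<^sub>R w) \<le> c (y + u *\<^sub>R w)"
        using dec \<open>u < v\<close> by simp
      then show ?thesis by (simp add: algebra_simps)
    qed simp
    moreover have "\<delta> > 0" using \<open>r > 0\<close> \<open>t0 > 0\<close> \<open>M > 0\<close> by (simp add: \<delta>_def)
    ultimately show "\<exists>\<delta>>0. \<forall>u\<in>{0..t} \<inter> ball s \<delta>. \<forall>v\<in>{0..t} \<inter> ball s \<delta>.
        u \<le> v \<longrightarrow> c (y + v *\<^sub>R w) \<le> c (y + u *\<^sub>R w)"
      by blast
  qed (use assms(1) in auto)
  then show ?thesis by simp
qed

definition cross_polytope_vertex :: "real^'n \<Rightarrow> real \<Rightarrow> 'n \<times> bool \<Rightarrow> real^'n" where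
  "cross_polytope_vertex d s j = d + (if snd j then s else - s) *\<^sub>R axis (fst j) 1"

lemma dist_cross_polytope_vertex: "dist (cross_polytope_vertex d s j) d = \<bar>s\<bar>"
  by (simp add: cross_polytope_vertex_def dist_norm)

lemma cross_polytope_vertex_combination:
  fixes d w :: "real^'n"
  assumes "s > 0" "norm (w - d) < s / CARD('n)"
  obtains \<mu> where "\<And>j. 0 \<le> \<mu> j" "w = (\<Sum>j\<in>UNIV. \<mu> j *\<^sub>R cross_polytope_vertex d s j)"
proof -
  define N where "N = real CARD('n)"
  have "N \<ge> 1" by (simp add: N_def Suc_le_eq)
  define X where "X i = N * (w $ i - d $ i) / s" for i
  \<comment> \<open>The two vertices along axis i together contribute d / N plus the i-th component of w - d.\<close>
  define \<mu> where "\<mu> j = (1 + (if snd j then X (fst j) else - X (fst j))) / (2 * N)" for j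
  have "\<bar>X i\<bar> < 1" for i
  proof -
    have "\<bar>w $ i - d $ i\<bar> < s / N"
      using component_le_norm_cart[of "w - d" i] assms(2) by (simp add: N_def)
    then have "N * \<bar>w $ i - d $ i\<bar> < s"
      using \<open>N \<ge> 1\<close> by (simp add: field_simps)
    moreover have "\<bar>X i\<bar> = N * \<bar>w $ i - d $ i\<bar> / s"
      using \<open>s > 0\<close> \<open>N \<ge> 1\<close> by (simp add: X_def abs_mult abs_divide)
    ultimately show ?thesis
      using \<open>s > 0\<close> by simp
  qed
  then have "0 \<le> 1 + (if snd j then X (fst j) else - X (fst j))" for j
    using abs_less_iff[of "X (fst j)" 1] by fastforce
  then have "0 \<le> \<mu> j" for j
    using \<open>N \<ge> 1\<close> unfolding \<mu>_def by (intro divide_nonneg_pos) auto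
  moreover have "(\<Sum>j\<in>UNIV. \<mu> j *\<^sub>R cross_polytope_vertex d s j) = w"
  proof (subst vec_eq_iff, intro allI)
    fix k
    have "(\<Sum>j\<in>UNIV. \<mu> j *\<^sub>R cross_polytope_vertex d s j) $ k
        = (\<Sum>j\<in>UNIV \<times> UNIV. \<mu> j * cross_polytope_vertex d s j $ k)"
      by (simp add: sum_component UNIV_Times_UNIV)
    also have "\<dots> = (\<Sum>i\<in>UNIV. \<Sum>b\<in>UNIV. \<mu> (i, b) * cross_polytope_vertex d s (i, b) $ k)"
      by (simp add: sum.cartesian_product)
    also have "\<dots> = (\<Sum>i\<in>UNIV. d $ k / N + (if k = i then w $ i - d $ i else 0))"
    proof (rule sum.cong[OF refl])
      fix i
      have "(\<Sum>b\<in>UNIV. \<mu> (i, b) * cross_polytope_vertex d s (i, b) $ k)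
          = \<mu> (i, True) * cross_polytope_vertex d s (i, True) $ k
            + \<mu> (i, False) * cross_polytope_vertex d s (i, False) $ k"
        by (simp add: UNIV_bool)
      also have "\<dots> = d $ k / N + (if k = i then w $ i - d $ i else 0)"
        using \<open>s > 0\<close> \<open>N \<ge> 1\<close>
        by (auto simp: \<mu>_def X_def cross_polytope_vertex_def axis_def field_simps)
      finally show "(\<Sum>b\<in>UNIV. \<mu> (i, b) * cross_polytope_vertex d s (i, b) $ k)
          = d $ k / N + (if k = i then w $ i - d $ i else 0)" .
    qed
    also have "\<dots> = w $ k"
      using \<open>N \<ge> 1\<close> by (simp add: sum.distrib N_def)
    finally show "(\<Sum>j\<in>UNIV. \<mu> j *\<^sub>R cross_polytope_vertex d s j) $ k = w $ k" .
  qed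
  ultimately show thesis using that by metis
qed

lemma open_hypertangent: "open (hypertangent \<Omega> x)"
  unfolding open_contains_ball
proof
  fix d assume "d \<in> hypertangent \<Omega> x"
  then obtain \<epsilon> where "\<epsilon> > 0" and hyp:
    "\<forall>y\<in>\<Omega> \<inter> ball x \<epsilon>. \<forall>w\<in>ball d \<epsilon>. \<forall>t. 0 < t \<and> t < \<epsilon> \<longrightarrow> y + t *\<^sub>R w \<in> \<Omega>"
    unfolding hypertangent_def by blast
  have "p \<in> hypertangent \<Omega> x" if "p \<in> ball d (\<epsilon> / 2)" for p
  proof -
    have "ball p (\<epsilon> / 2) \<subseteq> ball d \<epsilon>"
      using that by (simp add: ball_subset_ball_iff dist_commute)
    then have "\<forall>y\<in>\<Omega> \<inter> ball x (\<epsilon> / 2). \<forall>w\<in>ball p (\<epsilon> / 2). \<forall>t. 0 < t \<and> t < \<epsilon> / 2 \<longrightarrow> y + t *\<^sub>R w \<in> \<Omega>"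
      using hyp by auto
    then show ?thesis
      unfolding hypertangent_def using \<open>\<epsilon> > 0\<close> by (intro CollectI exI[of _ "\<epsilon> / 2"]) auto
  qed
  then show "\<exists>e>0. ball d e \<subseteq> hypertangent \<Omega> x"
    using \<open>\<epsilon> > 0\<close> by (intro exI[of _ "\<epsilon> / 2"]) auto
qed

lemma uniform_descent_dir_near:
  fixes c :: "real^'n \<Rightarrow> ereal"
  assumes "\<epsilon> > 0" "\<And>z. z \<in> ball x \<epsilon> \<Longrightarrow> \<bar>c z\<bar> \<noteq> \<infinity>"
    and "open H" "d \<in> H"
    and clarke: "\<forall>p\<in>H. \<exists>e>0. \<forall>y\<in>ball x e - A. clarke_dd c y p < 0"
  obtains r \<eta> where "r > 0" "\<eta> > 0"
    "\<And>u w. u \<in> ball x r - A \<Longrightarrow> w \<in> ball d \<eta> \<Longrightarrow> uniform_descent_dir c u w"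
proof -
  \<comment> \<open>The radius in the hypothesis depends on the direction, so it is used only for the finitely
    many vertices of a cross-polytope around d; every w near d lies in the cone they span.\<close>
  obtain \<rho> where "\<rho> > 0" "ball d \<rho> \<subseteq> H"
    using assms(3,4) open_contains_ball_eq by blast
  define s where "s = \<rho> / 2"
  define p where "p = cross_polytope_vertex d s"
  have "p j \<in> H" for j
    using \<open>\<rho> > 0\<close> \<open>ball d \<rho> \<subseteq> H\<close> dist_cross_polytope_vertex[of d s j]
    by (auto simp: p_def s_def dist_commute)
  then have "\<forall>j. \<exists>e>0. \<forall>y\<in>ball x e - A. clarke_dd c y (p j) < 0"
    using clarke by blast
  then obtain E where E: "\<And>j. E j > 0" "\<And>j y. y \<in> ball x (E j) - A \<Longrightarrow> clarke_dd c y (p j) < 0"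
    by metis
  define r where "r = min (Min (range E)) (\<epsilon> / 2)"
  define \<eta> where "\<eta> = s / CARD('n)"
  have "r > 0" "\<eta> > 0"
    using E(1) \<open>\<epsilon> > 0\<close> \<open>\<rho> > 0\<close> by (simp_all add: r_def \<eta>_def s_def)
  moreover have "uniform_descent_dir c u w" if u: "u \<in> ball x r - A" and w: "w \<in> ball d \<eta>" for u w
  proof -
    have "uniform_descent_dir c u (p j)" for j
    proof (rule clarke_dd_neg_imp_uniform_descent_dir)
      have "r \<le> E j" by (simp add: r_def min.coboundedI1)
      then show "clarke_dd c u (p j) < 0" using E(2) u by auto
      show "\<bar>c z\<bar> \<noteq> \<infinity>" if "z \<in> ball u (\<epsilon> / 2)" for z
        using assms(2) that u dist_triangle_half_l[of x u \<epsilon> z]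
        by (auto simp: r_def dist_commute)
    qed (use \<open>\<epsilon> > 0\<close> in simp)
    moreover obtain \<mu> where "\<And>j. 0 \<le> \<mu> j" "w = (\<Sum>j\<in>UNIV. \<mu> j *\<^sub>R p j)"
      using cross_polytope_vertex_combination[of s w d] w \<open>\<rho> > 0\<close>
      by (auto simp: p_def s_def \<eta>_def dist_norm norm_minus_commute)
    ultimately show ?thesis by (simp add: uniform_descent_dir_sum)
  qed
  ultimately show thesis using that by blast
qed

lemma c_int_neg_imp_Omega_int:
  assumes "finite Gint" "c_int g Gint z < 0"
  shows "z \<in> Omega_int g Gint"
proof (rule ccontr)
  assume "z \<notin> Omega_int g Gint"
  then obtain l where l: "l \<in> Gint" "g l z > 0" by (auto simp: Omega_int_def not_le)
  then have "c_int g Gint z = phi_prox g Gint z" by (auto simp: c_int_def)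
  also have "\<dots> \<ge> g l z" unfolding phi_prox_def using assms(1) l by (intro Max_ge) auto
  finally show False using l assms(2) by simp
qed

lemma c_ext_nonneg: "0 \<le> c_ext g Gext z"
  unfolding c_ext_def by (intro sum_nonneg) (simp add: power2_eq_square)

lemma c_ext_Omega_ext: "z \<in> Omega_ext g Gext \<Longrightarrow> c_ext g Gext z = 0"
  unfolding c_ext_def Omega_ext_def by (intro sum.neutral) (auto simp: max_def power2_eq_square dest: antisym)

lemma merit_less:
  assumes "f z < f y" "c_int g Gint z \<le> c_int g Gint y" "c_int g Gint y < 0"
    "c_ext g Gext z \<le> c_ext g Gext y" "0 < \<rho>"
    and "\<bar>f z\<bar> \<noteq> \<infinity>" "\<bar>f y\<bar> \<noteq> \<infinity>" "\<bar>c_int g Gint z\<bar> \<noteq> \<infinity>" "\<bar>c_ext g Gext y\<bar> \<noteq> \<infinity>"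
  shows "merit f g Gint Gext \<rho> z < merit f g Gint Gext \<rho> y"
proof -
  obtain a b where ab: "f z = ereal a" "f y = ereal b" using assms(6,7) by force
  obtain p q where pq: "c_int g Gint z = ereal p" "c_int g Gint y = ereal q"
    using assms(2,3,8) by (cases "c_int g Gint z"; cases "c_int g Gint y") auto
  obtain u v where uv: "c_ext g Gext z = ereal u" "c_ext g Gext y = ereal v"
    using assms(4,9) c_ext_nonneg[of g Gext z]
    by (cases "c_ext g Gext z"; cases "c_ext g Gext y") auto
  have "a < b" "p \<le> q" "q < 0" "u \<le> v" using assms(1-4) ab pq uv by simp_all
  then have "\<rho> * ln (- q) \<le> \<rho> * ln (- p)" "u / \<rho> \<le> v / \<rho>"
    using \<open>0 < \<rho>\<close> by (simp_all add: divide_right_mono)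
  moreover have "merit f g Gint Gext \<rho> z = ereal (a - \<rho> * ln (- p) + u / \<rho>)"
    "merit f g Gint Gext \<rho> y = ereal (b - \<rho> * ln (- q) + v / \<rho>)"
    using \<open>p \<le> q\<close> \<open>q < 0\<close> \<open>0 < \<rho>\<close> ab pq uv by (simp_all add: merit_def)
  ultimately show ?thesis using \<open>a < b\<close> by simp
qed

lemma c_ext_along_segment_le:
  assumes "finite Gint" "0 \<le> t" "t < \<epsilon>"
    and hyp: "\<forall>z\<in>Omega g Gint Gext \<inter> ball x \<epsilon>. \<forall>\<tau>. 0 < \<tau> \<and> \<tau> < \<epsilon> \<longrightarrow> z + \<tau> *\<^sub>R w \<in> Omega g Gint Gext"
    and descent: "\<And>u. u \<in> ball x \<epsilon> - Omega_ext g Gext \<Longrightarrow> uniform_descent_dir (c_ext g Gext) u w"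
    and seg: "\<And>\<sigma>. \<sigma> \<in> {0..t} \<Longrightarrow> y + \<sigma> *\<^sub>R w \<in> ball x \<epsilon> \<and> c_int g Gint (y + \<sigma> *\<^sub>R w) < 0"
  shows "c_ext g Gext (y + t *\<^sub>R w) \<le> c_ext g Gext y"
proof (cases "\<exists>\<sigma>\<in>{0..t}. y + \<sigma> *\<^sub>R w \<in> Omega_ext g Gext")
  case True
  then obtain \<sigma> where \<sigma>: "\<sigma> \<in> {0..t}" "y + \<sigma> *\<^sub>R w \<in> Omega_ext g Gext" by blast
  then have "y + \<sigma> *\<^sub>R w \<in> Omega g Gint Gext"
    using seg c_int_neg_imp_Omega_int[OF assms(1)] by (auto simp: Omega_def)
  have "y + t *\<^sub>R w \<in> Omega_ext g Gext"
  proof (cases "\<sigma> = t")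
    case False
    then have "(y + \<sigma> *\<^sub>R w) + (t - \<sigma>) *\<^sub>R w \<in> Omega g Gint Gext"
      using hyp seg \<sigma> \<open>y + \<sigma> *\<^sub>R w \<in> Omega g Gint Gext\<close> \<open>t < \<epsilon>\<close> by auto
    then show ?thesis by (simp add: Omega_def algebra_simps)
  qed (use \<sigma> in simp)
  then show ?thesis using c_ext_Omega_ext c_ext_nonneg by metis
next
  case False
  show ?thesis
  proof (rule uniform_descent_dir_segment[OF \<open>0 \<le> t\<close>])
    fix \<sigma> assume "\<sigma> \<in> {0..t}"
    then show "uniform_descent_dir (c_ext g Gext) (y + \<sigma> *\<^sub>R w) w"
      using descent seg False by blast
  qed
qed

lemma merit_step_less:
  assumes "finite Gint" "0 < t" "t < \<epsilon>" "0 < \<rho>" "c_int g Gint y < 0"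
    and seg: "\<And>\<sigma>. \<sigma> \<in> {0..t} \<Longrightarrow> y + \<sigma> *\<^sub>R w \<in> ball x \<epsilon>"
    and f_dec: "f (y + t *\<^sub>R w) < f y"
    and c_int_dec: "\<And>\<sigma>. 0 < \<sigma> \<Longrightarrow> \<sigma> \<le> t \<Longrightarrow> c_int g Gint (y + \<sigma> *\<^sub>R w) < c_int g Gint y"
    and hyp: "\<forall>z\<in>Omega g Gint Gext \<inter> ball x \<epsilon>. \<forall>\<tau>. 0 < \<tau> \<and> \<tau> < \<epsilon> \<longrightarrow> z + \<tau> *\<^sub>R w \<in> Omega g Gint Gext"
    and descent: "\<And>u. u \<in> ball x \<epsilon> - Omega_ext g Gext \<Longrightarrow> uniform_descent_dir (c_ext g Gext) u w"
    and finite_near: "\<And>z. z \<in> ball x \<epsilon> \<Longrightarrow>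
      \<bar>f z\<bar> \<noteq> \<infinity> \<and> \<bar>c_int g Gint z\<bar> \<noteq> \<infinity> \<and> \<bar>c_ext g Gext z\<bar> \<noteq> \<infinity>"
  shows "merit f g Gint Gext \<rho> (y + t *\<^sub>R w) < merit f g Gint Gext \<rho> y"
proof (rule merit_less[OF f_dec])
  show "c_int g Gint (y + t *\<^sub>R w) \<le> c_int g Gint y" using c_int_dec[of t] \<open>0 < t\<close> by simp
  show "c_ext g Gext (y + t *\<^sub>R w) \<le> c_ext g Gext y"
  proof (rule c_ext_along_segment_le[OF \<open>finite Gint\<close> _ \<open>t < \<epsilon>\<close> hyp descent])
    show "y + \<sigma> *\<^sub>R w \<in> ball x \<epsilon> \<and> c_int g Gint (y + \<sigma> *\<^sub>R w) < 0" if "\<sigma> \<in> {0..t}" for \<sigma>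
      using seg[OF that] c_int_dec[of \<sigma>] that \<open>c_int g Gint y < 0\<close> by (cases "\<sigma> = 0") auto
  qed (use \<open>0 < t\<close> in simp_all)
  show "\<bar>f (y + t *\<^sub>R w)\<bar> \<noteq> \<infinity>" "\<bar>f y\<bar> \<noteq> \<infinity>" "\<bar>c_int g Gint (y + t *\<^sub>R w)\<bar> \<noteq> \<infinity>"
    "\<bar>c_ext g Gext y\<bar> \<noteq> \<infinity>"
    using finite_near seg[of 0] seg[of t] \<open>0 < t\<close> by auto
qed (use assms(4,5) in simp_all)

lemma SCQ_uniform_estimates:
  assumes "SCQ g Gint Gext xbar" "d \<in> hypertangent (Omega g Gint Gext) xbar"
  obtains r \<eta> t0 where "r > 0" "\<eta> > 0" "t0 > 0"
    "\<And>y w t. y \<in> ball xbar r \<Longrightarrow> w \<in> ball d \<eta> \<Longrightarrow> 0 < t \<Longrightarrow> t < t0 \<Longrightarrow>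
      c_int g Gint (y + t *\<^sub>R w) < c_int g Gint y"
    "\<And>u w. u \<in> ball xbar r - Omega_ext g Gext \<Longrightarrow> w \<in> ball d \<eta> \<Longrightarrow>
      uniform_descent_dir (c_ext g Gext) u w"
    "\<And>w. w \<in> ball d \<eta> \<Longrightarrow> \<forall>z\<in>Omega g Gint Gext \<inter> ball xbar r. \<forall>\<tau>. 0 < \<tau> \<and> \<tau> < r \<longrightarrow>
      z + \<tau> *\<^sub>R w \<in> Omega g Gint Gext"
    "\<And>z. z \<in> ball xbar r \<Longrightarrow> \<bar>c_int g Gint z\<bar> \<noteq> \<infinity> \<and> \<bar>c_ext g Gext z\<bar> \<noteq> \<infinity>"
proof -
  let ?\<Omega> = "Omega g Gint Gext" and ?ci = "c_int g Gint" and ?ce = "c_ext g Gext"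
  have "lipschitz_near ?ci xbar" "lipschitz_near ?ce xbar" "clarke_dd ?ci xbar d < 0"
    and clarke_ce: "\<forall>p\<in>hypertangent ?\<Omega> xbar. \<exists>e>0. \<forall>y\<in>ball xbar e - Omega_ext g Gext. clarke_dd ?ce y p < 0"
    using assms unfolding SCQ_def by auto
  obtain \<epsilon>H where "\<epsilon>H > 0" and hyp:
    "\<forall>y\<in>?\<Omega> \<inter> ball xbar \<epsilon>H. \<forall>w\<in>ball d \<epsilon>H. \<forall>t. 0 < t \<and> t < \<epsilon>H \<longrightarrow> y + t *\<^sub>R w \<in> ?\<Omega>"
    using assms(2) unfolding hypertangent_def by blast
  obtain ri \<eta>i ti where "ri > 0" "\<eta>i > 0" "ti > 0" and ci_finite: "\<And>y. y \<in> ball xbar ri \<Longrightarrow> \<bar>?ci y\<bar> \<noteq> \<infinity>"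
    and ci_dec: "\<And>y w t. y \<in> ball xbar ri \<Longrightarrow> w \<in> ball d \<eta>i \<Longrightarrow> 0 < t \<Longrightarrow> t < ti \<Longrightarrow> ?ci (y + t *\<^sub>R w) < ?ci y"
    using clarke_dd_neg_imp_decrease[OF \<open>clarke_dd ?ci xbar d < 0\<close> \<open>lipschitz_near ?ci xbar\<close>] by metis
  obtain \<epsilon>e where "\<epsilon>e > 0" and ce_finite: "\<And>y. y \<in> ball xbar \<epsilon>e \<Longrightarrow> \<bar>?ce y\<bar> \<noteq> \<infinity>"
    using lipschitz_near_finite[OF \<open>lipschitz_near ?ce xbar\<close>] by blast
  obtain re \<eta>e where "re > 0" "\<eta>e > 0" and ce_descent:
    "\<And>u w. u \<in> ball xbar re - Omega_ext g Gext \<Longrightarrow> w \<in> ball d \<eta>e \<Longrightarrow> uniform_descent_dir ?ce u w"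
    using uniform_descent_dir_near[OF \<open>\<epsilon>e > 0\<close> ce_finite open_hypertangent assms(2) clarke_ce] by blast
  define r where "r = Min {ri, \<epsilon>e, re, \<epsilon>H}"
  define \<eta> where "\<eta> = Min {\<eta>i, \<eta>e, \<epsilon>H}"
  have "r > 0"
    unfolding r_def using \<open>ri > 0\<close> \<open>\<epsilon>e > 0\<close> \<open>re > 0\<close> \<open>\<epsilon>H > 0\<close> by (subst Min_gr_iff) auto
  have "\<eta> > 0"
    unfolding \<eta>_def using \<open>\<eta>i > 0\<close> \<open>\<eta>e > 0\<close> \<open>\<epsilon>H > 0\<close> by (subst Min_gr_iff) auto
  have r_le: "r \<le> ri" "r \<le> \<epsilon>e" "r \<le> re" "r \<le> \<epsilon>H"
    unfolding r_def by (rule Min_le; simp)+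
  have \<eta>_le: "\<eta> \<le> \<eta>i" "\<eta> \<le> \<eta>e" "\<eta> \<le> \<epsilon>H"
    unfolding \<eta>_def by (rule Min_le; simp)+
  show thesis
  proof (rule that[OF \<open>r > 0\<close> \<open>\<eta> > 0\<close> \<open>ti > 0\<close>])
    show "?ci (y + t *\<^sub>R w) < ?ci y"
      if "y \<in> ball xbar r" "w \<in> ball d \<eta>" "0 < t" "t < ti" for y w t
      using ci_dec that r_le(1) \<eta>_le(1) by simp
    show "uniform_descent_dir ?ce u w" if "u \<in> ball xbar r - Omega_ext g Gext" "w \<in> ball d \<eta>" for u w
      using ce_descent that r_le(3) \<eta>_le(2) by simp
    show "\<forall>z\<in>?\<Omega> \<inter> ball xbar r. \<forall>\<tau>. 0 < \<tau> \<and> \<tau> < r \<longrightarrow> z + \<tau> *\<^sub>R w \<in> ?\<Omega>" if "w \<in> ball d \<eta>" for w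
      using hyp that r_le(4) \<eta>_le(3) by simp
    show "\<bar>?ci z\<bar> \<noteq> \<infinity> \<and> \<bar>?ce z\<bar> \<noteq> \<infinity>" if "z \<in> ball xbar r" for z
      using ci_finite ce_finite that r_le(1,2) by simp
  qed
qed

lemma merit_descent_near_SCQ_point:
  assumes "finite Gint" "SCQ g Gint Gext xbar" "lipschitz_near f xbar"
    and d: "d \<in> hypertangent (Omega g Gint Gext) xbar" "clarke_dd f xbar d < 0"
  obtains r \<eta> t0 where "r > 0" "\<eta> > 0" "t0 > 0"
    "\<And>y w t \<rho>. y \<in> ball xbar r \<Longrightarrow> c_int g Gint y < 0 \<Longrightarrow> w \<in> ball d \<eta> \<Longrightarrow> 0 < t \<Longrightarrow> t < t0 \<Longrightarrow>
      0 < \<rho> \<Longrightarrow> merit f g Gint Gext \<rho> (y + t *\<^sub>R w) < merit f g Gint Gext \<rho> y"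
proof -
  obtain r1 \<eta>1 t1 where "r1 > 0" "\<eta>1 > 0" "t1 > 0"
    and ci_dec: "\<And>y w t. y \<in> ball xbar r1 \<Longrightarrow> w \<in> ball d \<eta>1 \<Longrightarrow> 0 < t \<Longrightarrow> t < t1 \<Longrightarrow>
      c_int g Gint (y + t *\<^sub>R w) < c_int g Gint y"
    and ce_descent: "\<And>u w. u \<in> ball xbar r1 - Omega_ext g Gext \<Longrightarrow> w \<in> ball d \<eta>1 \<Longrightarrow>
      uniform_descent_dir (c_ext g Gext) u w"
    and hyp: "\<And>w. w \<in> ball d \<eta>1 \<Longrightarrow> \<forall>z\<in>Omega g Gint Gext \<inter> ball xbar r1. \<forall>\<tau>. 0 < \<tau> \<and> \<tau> < r1 \<longrightarrow>
      z + \<tau> *\<^sub>R w \<in> Omega g Gint Gext"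
    and c_finite: "\<And>z. z \<in> ball xbar r1 \<Longrightarrow> \<bar>c_int g Gint z\<bar> \<noteq> \<infinity> \<and> \<bar>c_ext g Gext z\<bar> \<noteq> \<infinity>"
    using SCQ_uniform_estimates[OF assms(2) d(1)] by blast
  obtain rf \<eta>f tf where "rf > 0" "\<eta>f > 0" "tf > 0" and f_finite: "\<And>y. y \<in> ball xbar rf \<Longrightarrow> \<bar>f y\<bar> \<noteq> \<infinity>"
    and f_dec: "\<And>y w t. y \<in> ball xbar rf \<Longrightarrow> w \<in> ball d \<eta>f \<Longrightarrow> 0 < t \<Longrightarrow> t < tf \<Longrightarrow> f (y + t *\<^sub>R w) < f y"
    using clarke_dd_neg_imp_decrease[OF d(2) assms(3)] by metis
  define R where "R = min r1 rf"
  define \<eta> where "\<eta> = Min {\<eta>1, \<eta>f, 1}"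
  define M where "M = norm d + 1"
  define t0 where "t0 = Min {t1, tf, R / (2 * M)}"
  have "M > 0" "R > 0" using \<open>r1 > 0\<close> \<open>rf > 0\<close> by (simp_all add: M_def R_def add_nonneg_pos)
  have R_le: "R \<le> r1" "R \<le> rf" by (simp_all add: R_def)
  have "\<eta> > 0"
    unfolding \<eta>_def using \<open>\<eta>1 > 0\<close> \<open>\<eta>f > 0\<close> by (subst Min_gr_iff) auto
  have "t0 > 0"
    unfolding t0_def using \<open>t1 > 0\<close> \<open>tf > 0\<close> \<open>R > 0\<close> \<open>M > 0\<close> by (subst Min_gr_iff) auto
  have \<eta>_le: "\<eta> \<le> \<eta>1" "\<eta> \<le> \<eta>f" "\<eta> \<le> 1"
    unfolding \<eta>_def by (rule Min_le; simp)+
  have t0_le: "t0 \<le> t1" "t0 \<le> tf" "t0 \<le> R / (2 * M)"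
    unfolding t0_def by (rule Min_le; simp)+
  have "R / (2 * M) \<le> R" using \<open>R > 0\<close> \<open>M > 0\<close> by (simp add: M_def field_simps)
  have "merit f g Gint Gext \<rho> (y + t *\<^sub>R w) < merit f g Gint Gext \<rho> y"
    if y: "y \<in> ball xbar (R / 2)" "c_int g Gint y < 0" and w: "w \<in> ball d \<eta>"
      and t: "0 < t" "t < t0" and "0 < \<rho>" for y w t \<rho>
  proof (rule merit_step_less[OF assms(1) \<open>0 < t\<close> _ \<open>0 < \<rho>\<close> \<open>c_int g Gint y < 0\<close>])
    have "y \<in> ball xbar r1" "y \<in> ball xbar rf"
      using y(1) zero_le_dist[of xbar y] R_le unfolding mem_ball by linarith+
    have "norm w \<le> M"
      using w norm_triangle_ineq[of d "w - d"] \<eta>_le(3) by (simp add: M_def dist_norm norm_minus_commute)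
    show "y + \<sigma> *\<^sub>R w \<in> ball xbar R" if "\<sigma> \<in> {0..t}" for \<sigma>
    proof -
      have "\<sigma> * norm w \<le> R / (2 * M) * M"
        using that t t0_le(3) \<open>norm w \<le> M\<close> by (intro mult_mono) auto
      then show ?thesis
        using add_scaleR_mem_ball[of xbar y "R / 2" \<sigma> w "R / 2"] y that \<open>M > 0\<close> by simp
    qed
    show "t < R" using t t0_le(3) \<open>R / (2 * M) \<le> R\<close> by simp
    show "f (y + t *\<^sub>R w) < f y"
      using f_dec \<open>y \<in> ball xbar rf\<close> w t t0_le(2) \<eta>_le(2) by simp
    show "c_int g Gint (y + \<sigma> *\<^sub>R w) < c_int g Gint y" if "0 < \<sigma>" "\<sigma> \<le> t" for \<sigma>
      using ci_dec \<open>y \<in> ball xbar r1\<close> w t that t0_le(1) \<eta>_le(1) by simp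
    show "\<forall>z\<in>Omega g Gint Gext \<inter> ball xbar R. \<forall>\<tau>. 0 < \<tau> \<and> \<tau> < R \<longrightarrow> z + \<tau> *\<^sub>R w \<in> Omega g Gint Gext"
      using hyp[of w] w \<eta>_le(1) R_le(1) by auto
    show "uniform_descent_dir (c_ext g Gext) u w" if "u \<in> ball xbar R - Omega_ext g Gext" for u
      using ce_descent that w \<eta>_le(1) R_le(1) by simp
    show "\<bar>f z\<bar> \<noteq> \<infinity> \<and> \<bar>c_int g Gint z\<bar> \<noteq> \<infinity> \<and> \<bar>c_ext g Gext z\<bar> \<noteq> \<infinity>" if "z \<in> ball xbar R" for z
      using f_finite c_finite that R_le by simp
  qed
  moreover have "R / 2 > 0" using \<open>R > 0\<close> by simp
  ultimately show thesis using \<open>\<eta> > 0\<close> \<open>t0 > 0\<close> by (intro that[of "R / 2" \<eta> t0]) simp_all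
qed

lemma merit_less_infinity_iff:
  assumes "0 < \<rho>" "f y \<noteq> -\<infinity>"
  shows "merit f g Gint Gext \<rho> y < \<infinity> \<longleftrightarrow>
    c_int g Gint y < 0 \<and> f y < \<infinity> \<and> c_ext g Gext y < \<infinity>"
  using assms c_ext_nonneg[of g Gext y]
  by (cases "f y"; cases "c_ext g Gext y") (auto simp: merit_def)

lemma mads_pip_run_params:
  assumes "mads_pip_run f g Gint Gext \<theta>\<rho> \<theta>\<Delta> \<beta> x \<Delta> \<rho> S D"
  shows "\<rho> 0 > 0" "0 < \<theta>\<rho>" "\<theta>\<rho> < 1" "0 < \<theta>\<Delta>" "\<beta> > 1"
    "merit f g Gint Gext (\<rho> 0) (x 0) < \<infinity>"
  using assms unfolding mads_pip_run_def by auto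

lemma mads_pip_run_cases [consumes 1, case_names success failure]:
  assumes "mads_pip_run f g Gint Gext \<theta>\<rho> \<theta>\<Delta> \<beta> x \<Delta> \<rho> S D"
  obtains (success) "merit f g Gint Gext (\<rho> k) (x (Suc k)) < merit f g Gint Gext (\<rho> k) (x k)"
      "\<rho> (Suc k) = \<rho> k"
  | (failure) "\<forall>d\<in>D k. \<not> merit f g Gint Gext (\<rho> k) (x k + d) < merit f g Gint Gext (\<rho> k) (x k)"
      "\<forall>d\<in>D k. x k + d \<in> frame x \<Delta> k" "0 \<notin> D k" "x (Suc k) = x k" "\<Delta> (Suc k) = \<theta>\<Delta> * \<Delta> k"
      "\<rho> (Suc k) = (if ereal (\<Delta> (Suc k)) \<le> min (ereal (\<rho> k powr \<beta>)) (phi_prox_sq g Gint (x k))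
                    then \<theta>\<rho> * \<rho> k else \<rho> k)"
  using assms unfolding mads_pip_run_def Let_def
  by (elim conjE allE[where x = k]) (auto split: if_splits intro: success failure)

lemma mads_pip_run_rho_step:
  assumes "mads_pip_run f g Gint Gext \<theta>\<rho> \<theta>\<Delta> \<beta> x \<Delta> \<rho> S D"
  shows "\<rho> (Suc k) = \<rho> k \<or> \<rho> (Suc k) = \<theta>\<rho> * \<rho> k"
  using assms by (cases rule: mads_pip_run_cases[where k = k]) auto

lemma mads_pip_run_rho_pos:
  assumes "mads_pip_run f g Gint Gext \<theta>\<rho> \<theta>\<Delta> \<beta> x \<Delta> \<rho> S D"
  shows "\<rho> k > 0"
proof (induction k)
  case 0
  show ?case using mads_pip_run_params(1)[OF assms] .
next
  case (Suc k)
  then show ?case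
    using mads_pip_run_rho_step[OF assms, of k] mads_pip_run_params(2)[OF assms] by auto
qed

lemma mads_pip_run_rho_decseq:
  assumes "mads_pip_run f g Gint Gext \<theta>\<rho> \<theta>\<Delta> \<beta> x \<Delta> \<rho> S D"
  shows "decseq \<rho>"
proof (rule decseq_SucI)
  fix k
  have "\<theta>\<rho> * \<rho> k \<le> \<rho> k"
    using mads_pip_run_params(3)[OF assms] mads_pip_run_rho_pos[OF assms, of k] by simp
  then show "\<rho> (Suc k) \<le> \<rho> k" using mads_pip_run_rho_step[OF assms, of k] by auto
qed

lemma mads_pip_run_c_int_neg:
  assumes "mads_pip_run f g Gint Gext \<theta>\<rho> \<theta>\<Delta> \<beta> x \<Delta> \<rho> S D" "\<forall>y. f y \<noteq> -\<infinity>"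
  shows "c_int g Gint (x k) < 0"
proof -
  have "merit f g Gint Gext (\<rho> k) (x k) < \<infinity>"
  proof (induction k)
    case 0
    show ?case using mads_pip_run_params(6)[OF assms(1)] .
  next
    case (Suc k)
    show ?case
    using assms(1) proof (cases rule: mads_pip_run_cases[where k = k])
      case success
      then show ?thesis using Suc by auto
    next
      case failure
      then show ?thesis
        using Suc merit_less_infinity_iff mads_pip_run_rho_pos[OF assms(1)] assms(2) by metis
    qed
  qed
  then show ?thesis
    using merit_less_infinity_iff mads_pip_run_rho_pos[OF assms(1)] assms(2) by blast
qed

lemma mads_pip_run_K_rho:
  assumes "mads_pip_run f g Gint Gext \<theta>\<rho> \<theta>\<Delta> \<beta> x \<Delta> \<rho> S D" "k \<in> K_rho \<rho>"
  shows "\<forall>d\<in>D k. \<not> merit f g Gint Gext (\<rho> k) (x k + d) < merit f g Gint Gext (\<rho> k) (x k)"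
    and "\<forall>d\<in>D k. x k + d \<in> frame x \<Delta> k" and "0 \<notin> D k"
    and "\<rho> (Suc k) = \<theta>\<rho> * \<rho> k" and "\<theta>\<Delta> * \<Delta> k \<le> \<rho> k powr \<beta>"
proof -
  have "\<rho> (Suc k) < \<rho> k" using assms(2) by (simp add: K_rho_def)
  with assms(1) have "(\<forall>d\<in>D k. \<not> merit f g Gint Gext (\<rho> k) (x k + d) < merit f g Gint Gext (\<rho> k) (x k))
    \<and> (\<forall>d\<in>D k. x k + d \<in> frame x \<Delta> k) \<and> 0 \<notin> D k
    \<and> \<rho> (Suc k) = \<theta>\<rho> * \<rho> k \<and> \<theta>\<Delta> * \<Delta> k \<le> \<rho> k powr \<beta>"
    by (cases rule: mads_pip_run_cases[where k = k]) (auto split: if_splits)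
  then show "\<forall>d\<in>D k. \<not> merit f g Gint Gext (\<rho> k) (x k + d) < merit f g Gint Gext (\<rho> k) (x k)"
    and "\<forall>d\<in>D k. x k + d \<in> frame x \<Delta> k" and "0 \<notin> D k"
    and "\<rho> (Suc k) = \<theta>\<rho> * \<rho> k" and "\<theta>\<Delta> * \<Delta> k \<le> \<rho> k powr \<beta>"
    by auto
qed

lemma tendsto_zero_if_frequently_contracting:
  fixes \<rho> :: "nat \<Rightarrow> real"
  assumes "decseq \<rho>" "\<And>k. 0 \<le> \<rho> k" "infinite K" "\<And>k. k \<in> K \<Longrightarrow> \<rho> (Suc k) \<le> \<theta> * \<rho> k" "\<theta> < 1"
  shows "\<rho> \<longlonglongrightarrow> 0"
proof -
  obtain L where lim: "\<rho> \<longlonglongrightarrow> L" and "\<forall>i. L \<le> \<rho> i"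
    using decseq_convergent[OF assms(1), of 0] assms(2) by blast
  have "L \<ge> 0" using LIMSEQ_le_const[OF lim] assms(2) by blast
  define h where "h = enumerate K"
  have "strict_mono h" "\<And>n. h n \<in> K"
    using assms(3) by (simp_all add: h_def strict_mono_enumerate enumerate_in_set)
  have "(\<lambda>n. \<rho> (Suc (h n))) \<longlonglongrightarrow> L"
    using LIMSEQ_subseq_LIMSEQ[OF LIMSEQ_Suc[OF lim] \<open>strict_mono h\<close>] by (simp add: comp_def)
  moreover have "(\<lambda>n. \<theta> * \<rho> (h n)) \<longlonglongrightarrow> \<theta> * L"
    using LIMSEQ_subseq_LIMSEQ[OF lim \<open>strict_mono h\<close>] by (intro tendsto_mult_left) (simp add: comp_def)
  ultimately have "L \<le> \<theta> * L"
    using assms(4) \<open>\<And>n. h n \<in> K\<close> by (intro LIMSEQ_le) auto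
  then have "L = 0" using \<open>L \<ge> 0\<close> mult_strict_right_mono[OF \<open>\<theta> < 1\<close>, of L] by fastforce
  then show ?thesis using lim by simp
qed

lemma mads_pip_run_frame_size_small:
  assumes "mads_pip_run f g Gint Gext \<theta>\<rho> \<theta>\<Delta> \<beta> x \<Delta> \<rho> S D" "infinite (K_rho \<rho>)" "e > 0"
  obtains N where "\<And>k. k \<in> K_rho \<rho> \<Longrightarrow> N \<le> k \<Longrightarrow> \<Delta> k < e"
proof -
  note params = mads_pip_run_params[OF assms(1)]
  have "\<rho> \<longlonglongrightarrow> 0"
    using mads_pip_run_rho_decseq[OF assms(1)] mads_pip_run_rho_pos[OF assms(1)] assms(2)
      mads_pip_run_K_rho(4)[OF assms(1)] params(3)
    by (intro tendsto_zero_if_frequently_contracting[where K = "K_rho \<rho>" and \<theta> = \<theta>\<rho>]) (auto intro: less_imp_le)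
  moreover have "min 1 (\<theta>\<Delta> * e) > 0" using params(4) \<open>e > 0\<close> by simp
  ultimately obtain N where "\<forall>k\<ge>N. norm (\<rho> k - 0) < min 1 (\<theta>\<Delta> * e)"
    using LIMSEQ_D by blast
  then have N: "\<And>k. N \<le> k \<Longrightarrow> \<rho> k < min 1 (\<theta>\<Delta> * e)"
    by (simp add: abs_less_iff)
  have "\<Delta> k < e" if "k \<in> K_rho \<rho>" "N \<le> k" for k
  proof -
    have "\<theta>\<Delta> * \<Delta> k \<le> \<rho> k powr \<beta>" using mads_pip_run_K_rho(5)[OF assms(1) that(1)] .
    also have "\<dots> \<le> \<rho> k powr 1"
      using N[OF that(2)] mads_pip_run_rho_pos[OF assms(1), of k] params(5)
      by (intro powr_mono') auto
    also have "\<dots> < \<theta>\<Delta> * e" using N[OF that(2)] mads_pip_run_rho_pos[OF assms(1), of k] by simp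
    finally show ?thesis using params(4) by simp
  qed
  then show thesis using that by blast
qed

lemma end_path_poll_directions:
  assumes run: "mads_pip_run f g Gint Gext \<theta>\<rho> \<theta>\<Delta> \<beta> x \<Delta> \<rho> S D"
    and "end_path_subsequence x \<rho> K xbar" "dense_poll D K"
    and "d \<noteq> 0" "r > 0" "\<eta> > 0" "t0 > 0"
  obtains k t w where "k \<in> K_rho \<rho>" "x k \<in> ball xbar r" "t *\<^sub>R w \<in> D k" "w \<in> ball d \<eta>"
    "0 < t" "t < t0"
proof -
  have K: "K \<subseteq> K_rho \<rho>" "infinite K" "conv_along x K xbar"
    using assms(2) by (auto simp: end_path_subsequence_def)
  have "norm d > 0" using \<open>d \<noteq> 0\<close> by simp
  obtain N0 where N0: "\<And>k. k \<in> K_rho \<rho> \<Longrightarrow> N0 \<le> k \<Longrightarrow> \<Delta> k < norm d * t0"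
    using mads_pip_run_frame_size_small[OF run infinite_super[OF K(1,2)]] \<open>norm d > 0\<close> \<open>t0 > 0\<close>
    by (metis mult_pos_pos)
  define dbar where "dbar = d /\<^sub>R norm d"
  have "norm dbar = 1" using \<open>norm d > 0\<close> by (simp add: dbar_def)
  then obtain Kd p where Kd: "Kd \<subseteq> K" "infinite Kd" "\<forall>k\<in>Kd. p k \<in> D k"
    and p_conv: "conv_along (\<lambda>k. p k /\<^sub>R norm (p k)) Kd dbar"
    using assms(3) unfolding dense_poll_def by blast
  obtain N1 where N1: "\<forall>k\<in>K. N1 \<le> k \<longrightarrow> dist (x k) xbar < r"
    using K(3) \<open>r > 0\<close> unfolding conv_along_def by blast
  obtain N2 where N2: "\<forall>k\<in>Kd. N2 \<le> k \<longrightarrow> dist (p k /\<^sub>R norm (p k)) dbar < \<eta> / norm d"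
    using p_conv \<open>\<eta> > 0\<close> \<open>norm d > 0\<close> unfolding conv_along_def by (metis divide_pos_pos)
  obtain k where k: "k \<in> Kd" "max N0 (max N1 N2) \<le> k"
    using Kd(2) unfolding infinite_nat_iff_unbounded_le by blast
  then have "k \<in> K_rho \<rho>" using Kd(1) K(1) by blast
  have "p k \<in> D k" using Kd(3) k(1) by blast
  then have "p k \<noteq> 0" "norm (p k) \<le> \<Delta> k"
    using mads_pip_run_K_rho(2,3)[OF run \<open>k \<in> K_rho \<rho>\<close>] by (auto simp: frame_def)
  define t where "t = norm (p k) / norm d"
  define w where "w = (norm d / norm (p k)) *\<^sub>R p k"
  have "t *\<^sub>R w = p k" using \<open>p k \<noteq> 0\<close> \<open>norm d > 0\<close> by (simp add: t_def w_def)
  moreover have "0 < t" using \<open>p k \<noteq> 0\<close> \<open>norm d > 0\<close> by (simp add: t_def)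
  moreover have "t < t0"
    using N0[OF \<open>k \<in> K_rho \<rho>\<close>] k(2) \<open>norm (p k) \<le> \<Delta> k\<close> \<open>norm d > 0\<close>
    by (simp add: t_def pos_divide_less_eq mult.commute)
  moreover have "w \<in> ball d \<eta>"
  proof -
    have "w - d = norm d *\<^sub>R (p k /\<^sub>R norm (p k) - dbar)"
      using \<open>norm d > 0\<close> by (simp add: w_def dbar_def algebra_simps divide_inverse)
    then have "dist d w = norm d * dist (p k /\<^sub>R norm (p k)) dbar"
      by (simp add: dist_norm norm_minus_commute[of d w])
    also have "\<dots> < norm d * (\<eta> / norm d)"
      using N2 k \<open>norm d > 0\<close> by (intro mult_strict_left_mono) auto
    finally show ?thesis using \<open>norm d > 0\<close> by simp
  qed
  moreover have "x k \<in> ball xbar r" using N1 k Kd(1) by (auto simp: dist_commute)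
  ultimately show thesis using that \<open>k \<in> K_rho \<rho>\<close> \<open>p k \<in> D k\<close> by metis
qed

theorem mainTheorem8:
  fixes f :: "real^'n \<Rightarrow> ereal" and g :: "nat \<Rightarrow> real^'n \<Rightarrow> ereal"
    and m :: nat and Gint Gext :: "nat set"
    and \<theta>\<rho> \<theta>\<Delta> \<beta> :: real
    and x :: "nat \<Rightarrow> real^'n" and \<Delta> \<rho> :: "nat \<Rightarrow> real"
    and S D :: "nat \<Rightarrow> (real^'n) set"
    and K :: "nat set" and xbar :: "real^'n"
  assumes f_range: "\<forall>y. f y \<noteq> -\<infinity>"
    and g_range: "\<forall>l y. g l y \<noteq> -\<infinity>"
    and partition: "Gint \<union> Gext = {1..m}" "Gint \<inter> Gext = {}"
    and assumption1: "\<forall>\<alpha>::real. bounded {y. f y \<le> ereal \<alpha>}"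
    and run: "mads_pip_run f g Gint Gext \<theta>\<rho> \<theta>\<Delta> \<beta> x \<Delta> \<rho> S D"
    and endpath: "end_path_subsequence x \<rho> K xbar"
    and f_lip: "lipschitz_near f xbar"
    and dense: "dense_poll D K"
    and scq: "SCQ g Gint Gext xbar"
  shows "\<forall>d\<in>hypertangent (Omega g Gint Gext) xbar. clarke_dd f xbar d \<ge> 0"
proof (rule ballI, rule ccontr)
  fix d assume d: "d \<in> hypertangent (Omega g Gint Gext) xbar" and "\<not> clarke_dd f xbar d \<ge> 0"
  then have f_desc: "clarke_dd f xbar d < 0" by simp
  have "finite Gint" using partition(1) by (metis finite_Un finite_atLeastAtMost)
  obtain r \<eta> t0 where "r > 0" "\<eta> > 0" "t0 > 0" and merit_desc:
    "\<And>y w t \<rho>'. y \<in> ball xbar r \<Longrightarrow> c_int g Gint y < 0 \<Longrightarrow> w \<in> ball d \<eta> \<Longrightarrow> 0 < t \<Longrightarrow> t < t0 \<Longrightarrow>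
      0 < \<rho>' \<Longrightarrow> merit f g Gint Gext \<rho>' (y + t *\<^sub>R w) < merit f g Gint Gext \<rho>' y"
    using merit_descent_near_SCQ_point[OF \<open>finite Gint\<close> scq f_lip d f_desc] by blast
  obtain k t w where k: "k \<in> K_rho \<rho>" "x k \<in> ball xbar r" "t *\<^sub>R w \<in> D k" "w \<in> ball d \<eta>"
    and t: "0 < t" "t < t0"
    using end_path_poll_directions[OF run endpath dense clarke_dd_neg_imp_nonzero[OF f_desc f_lip]
        \<open>r > 0\<close> \<open>\<eta> > 0\<close> \<open>t0 > 0\<close>] by blast
  have "merit f g Gint Gext (\<rho> k) (x k + t *\<^sub>R w) < merit f g Gint Gext (\<rho> k) (x k)"
    using merit_desc[OF k(2) mads_pip_run_c_int_neg[OF run f_range] k(4) t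
        mads_pip_run_rho_pos[OF run]] .
  then show False using mads_pip_run_K_rho(1)[OF run k(1)] k(3) by blast
qed

end
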